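(* Let $G$ be a reducible multigraph. Then the number of degree-$0$ vertices remaining after $G$ has been fully reduced by channel-preserving moves equals $\dim_{\mathbf{Z}/2\mathbf{Z}}\mathcal{C}(G)$; in particular this number does not depend on the sequence of channel-preserving moves used.
   Context: Multigraphs (finite, no self-loops) are allowed; $N(v)$ is the multiset of neighbours of $v$ with multiplicity equal to the number of joining edges. A channel is a vertex set $C$ such that every vertex $v$ has an even number of elements of $N(v)$ (counted with multiplicity) in $C$; $\mathcal{C}(G)$ is the $\mathbf{Z}/2\mathbf{Z}$-vector space of channels under symmetric difference. Channel-preserving moves: (VC) for a vertex $v$ of degree 2 adjacent to distinct $v_1,v_2$, contract both edges at $v$ and delete resulting self-loops; (ED) delete two edges with the same endpoints; (FV) for distinct adjacent $v_1,v_2$ with $\deg v_1=1$, delete $v_1,v_2$ and their incident edges. $G$ is reducible if it can be transformed by a finite sequence of channel-preserving moves into a graph all of whose vertices have degree $0$. *)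

theory Defs
  imports Main HOL.Vector_Spaces "HOL-Library.Z2" "HOL-Library.Function_Algebras"
begin

text \<open>A finite loopless multigraph on vertex type 'a: a vertex set V together with an
edge-multiplicity function m (m u v = number of edges joining u and v).\<close>

type_synonym 'a mgraph = "'a set \<times> ('a \<Rightarrow> 'a \<Rightarrow> nat)"

definition verts :: "'a mgraph \<Rightarrow> 'a set" where "verts G = fst G"
definition mult :: "'a mgraph \<Rightarrow> 'a \<Rightarrow> 'a \<Rightarrow> nat" where "mult G = snd G"

definition wf_mgraph :: "'a mgraph \<Rightarrow> bool" where
  "wf_mgraph G \<longleftrightarrow> finite (verts G)
     \<and> (\<forall>u v. mult G u v = mult G v u)
     \<and> (\<forall>v. mult G v v = 0)
     \<and> (\<forall>u v. mult G u v \<noteq> 0 \<longrightarrow> u \<in> verts G \<and> v \<in> verts G)"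

definition deg :: "'a mgraph \<Rightarrow> 'a \<Rightarrow> nat" where
  "deg G v = (\<Sum>u\<in>verts G. mult G v u)"

definition channels :: "'a mgraph \<Rightarrow> 'a set set" where
  "channels G = {C. C \<subseteq> verts G \<and> (\<forall>v\<in>verts G. even (\<Sum>u\<in>C. mult G v u))}"

text \<open>Z/2Z-vector space structure: a vertex set is identified with its indicator function
'a \<Rightarrow> bit; symmetric difference corresponds to pointwise addition.\<close>
definition ind :: "'a set \<Rightarrow> 'a \<Rightarrow> bit" where
  "ind C = (\<lambda>x. if x \<in> C then 1 else 0)"

definition bscale :: "bit \<Rightarrow> ('a \<Rightarrow> bit) \<Rightarrow> ('a \<Rightarrow> bit)" where
  "bscale c f = (\<lambda>x. c * f x)"

definition channel_dim :: "'a mgraph \<Rightarrow> nat" where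
  "channel_dim G = vector_space.dim bscale (ind ` channels G)"

text \<open>(VC) v of degree 2 adjacent to distinct v1, v2: contract both edges at v; the merged
vertex keeps the name v1; self-loops (former v1-v2 edges) are deleted.\<close>
definition vc_result :: "'a mgraph \<Rightarrow> 'a \<Rightarrow> 'a \<Rightarrow> 'a \<Rightarrow> 'a mgraph" where
  "vc_result G v v1 v2 =
    (verts G - {v, v2},
     (\<lambda>x y. if x \<in> {v, v2} \<or> y \<in> {v, v2} \<or> x = y then 0
            else if x = v1 then mult G v1 y + mult G v2 y
            else if y = v1 then mult G x v1 + mult G x v2
            else mult G x y))"

definition vc_move :: "'a mgraph \<Rightarrow> 'a mgraph \<Rightarrow> bool" where
  "vc_move G H \<longleftrightarrow> (\<exists>v v1 v2. v \<in> verts G \<and> deg G v = 2 \<and> v1 \<noteq> v2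
      \<and> mult G v v1 = 1 \<and> mult G v v2 = 1 \<and> H = vc_result G v v1 v2)"

definition ed_move :: "'a mgraph \<Rightarrow> 'a mgraph \<Rightarrow> bool" where
  "ed_move G H \<longleftrightarrow> (\<exists>a b. a \<noteq> b \<and> mult G a b \<ge> 2
      \<and> H = (verts G, (\<lambda>x y. if (x = a \<and> y = b) \<or> (x = b \<and> y = a)
                              then mult G x y - 2 else mult G x y)))"

definition fv_move :: "'a mgraph \<Rightarrow> 'a mgraph \<Rightarrow> bool" where
  "fv_move G H \<longleftrightarrow> (\<exists>v1 v2. v1 \<in> verts G \<and> v1 \<noteq> v2 \<and> mult G v1 v2 \<ge> 1 \<and> deg G v1 = 1
      \<and> H = (verts G - {v1, v2},
             (\<lambda>x y. if x \<in> {v1, v2} \<or> y \<in> {v1, v2} then 0 else mult G x y)))"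

definition cp_move :: "'a mgraph \<Rightarrow> 'a mgraph \<Rightarrow> bool" where
  "cp_move G H \<longleftrightarrow> vc_move G H \<or> ed_move G H \<or> fv_move G H"

definition fully_reduced :: "'a mgraph \<Rightarrow> bool" where
  "fully_reduced H \<longleftrightarrow> (\<forall>v\<in>verts H. deg H v = 0)"

definition reducible :: "'a mgraph \<Rightarrow> bool" where
  "reducible G \<longleftrightarrow> (\<exists>H. cp_move\<^sup>*\<^sup>* G H \<and> fully_reduced H)"

end

theory Submission
  imports Defs
begin

text \<open>Every channel-preserving move G \<leadsto> H removes a set A of vertices (A = {} for (ED), two
vertices for (VC) and (FV)), and C \<mapsto> C - A maps the channels of G bijectively onto the channels
of H. On indicator functions this map is the restriction of the linear map that zeroes the
coordinates in A, so it preserves the dimension over \<open>\<int>/2\<int>\<close>. Along a reduction the channel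
dimension therefore stays constant, and in a graph all of whose vertices have degree 0 every vertex
set is a channel, so there the channel dimension is the number of vertices.\<close>

section \<open>Linear algebra over \<open>bit\<close>\<close>

interpretation bitfun: vector_space "bscale :: bit \<Rightarrow> ('a \<Rightarrow> bit) \<Rightarrow> ('a \<Rightarrow> bit)"
  by unfold_locales (auto simp: bscale_def fun_eq_iff algebra_simps)

context linear
begin

lemma dim_image_eq_if_inj_on_subspace:
  assumes S: "vs1.subspace S" and inj: "inj_on f S"
  shows "vs2.dim (f ` S) = vs1.dim S"
proof -
  obtain B where B: "B \<subseteq> S" "vs1.independent B" "S \<subseteq> vs1.span B" "card B = vs1.dim S"
    using vs1.basis_exists by blast
  have span_B: "vs1.span B = S"
    by (rule vs1.span_subspace[OF B(1) B(3) S])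
  have "vs2.dim (f ` S) = vs2.dim (vs2.span (f ` B))"
    using span_B span_image by simp
  also have "\<dots> = card (f ` B)"
    using dependent_inj_imageD B(2) inj span_B vs2.dim_span_eq_card_independent by metis
  also have "\<dots> = card B"
    using inj B(1) by (meson card_image inj_on_subset)
  finally show ?thesis using B(4) by simp
qed

end

definition zero_on :: "'a set \<Rightarrow> ('a \<Rightarrow> bit) \<Rightarrow> ('a \<Rightarrow> bit)" where
  "zero_on A g = (\<lambda>x. if x \<in> A then 0 else g x)"

lemma linear_zero_on: "Vector_Spaces.linear bscale bscale (zero_on A)"
  by unfold_locales (auto simp: zero_on_def bscale_def fun_eq_iff)

lemma ind_empty [simp]: "ind {} = 0"
  by (simp add: ind_def zero_fun_def)

lemma ind_eq_0_iff [simp]: "ind C = 0 \<longleftrightarrow> C = {}"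
  by (auto simp: ind_def fun_eq_iff)

lemma ind_inject [simp]: "ind C = ind D \<longleftrightarrow> C = D"
  by (auto simp: ind_def fun_eq_iff split: if_splits)

lemma ind_add: "ind C + ind D = ind (sym_diff C D)"
  by (auto simp: ind_def fun_eq_iff)

lemma bscale_ind: "bscale c (ind C) = (if c = 0 then 0 else ind C)"
  by (cases c) (auto simp: ind_def bscale_def fun_eq_iff)

lemma zero_on_ind: "zero_on A (ind C) = ind (C - A)"
  by (auto simp: ind_def zero_on_def fun_eq_iff)

lemma subspace_ind_image:
  assumes "{} \<in> \<S>" and "\<And>C D. C \<in> \<S> \<Longrightarrow> D \<in> \<S> \<Longrightarrow> sym_diff C D \<in> \<S>"
  shows "bitfun.subspace (ind ` \<S>)"
proof (rule bitfun.subspaceI)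
  show "0 \<in> ind ` \<S>"
    using assms(1) ind_empty by (metis image_eqI)
  show "x + y \<in> ind ` \<S>" if "x \<in> ind ` \<S>" "y \<in> ind ` \<S>" for x y
    using that assms(2) by (auto simp: ind_add)
  show "bscale c x \<in> ind ` \<S>" if "x \<in> ind ` \<S>" for c x
    using that assms(1) by (auto simp: bscale_ind)
qed

lemma dim_ind_Pow:
  assumes "finite V"
  shows "bitfun.dim (ind ` Pow V) = card V"
proof -
  define B where "B = (\<lambda>x. ind {x}) ` V"
  have subspace_Pow: "bitfun.subspace (ind ` Pow W)" for W :: "'a set"
    by (rule subspace_ind_image) auto
  have "ind C \<in> bitfun.span B" if "C \<subseteq> V" for C
    using finite_subset[OF that assms] that
  proof (induction C rule: finite_induct)
    case empty
    thus ?case by (simp only: ind_empty bitfun.span_zero)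
  next
    case (insert x F)
    have "ind {x} \<in> bitfun.span B"
      using insert.prems by (auto simp: B_def intro: bitfun.span_base)
    moreover have "ind F \<in> bitfun.span B"
      using insert.IH insert.prems by simp
    ultimately have "ind {x} + ind F \<in> bitfun.span B"
      by (rule bitfun.span_add)
    moreover have "ind {x} + ind F = ind (insert x F)"
      using insert.hyps(2) by (auto simp: ind_def fun_eq_iff)
    ultimately show ?case
      by simp
  qed
  hence span_B: "bitfun.span B = ind ` Pow V"
    by (intro bitfun.span_subspace) (auto simp: B_def subspace_Pow)
  have "bitfun.independent B"
  proof
    assume "bitfun.dependent B"
    then obtain x where x: "x \<in> V" "ind {x} \<in> bitfun.span (B - {ind {x}})"
      unfolding bitfun.dependent_def B_def by auto
    have "B - {ind {x}} \<subseteq> ind ` Pow (V - {x})"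
      by (auto simp: B_def)
    hence "bitfun.span (B - {ind {x}}) \<subseteq> ind ` Pow (V - {x})"
      by (rule bitfun.span_minimal[OF _ subspace_Pow])
    with x have "ind {x} \<in> ind ` Pow (V - {x})"
      by blast
    thus False
      by auto
  qed
  hence "bitfun.dim (ind ` Pow V) = card B"
    using span_B by (metis bitfun.dim_span_eq_card_independent)
  also have "\<dots> = card V"
    unfolding B_def by (rule card_image) (auto simp: inj_on_def)
  finally show ?thesis .
qed

lemma wf_mgraphD:
  assumes "wf_mgraph G"
  shows "finite (verts G)" "mult G u v = mult G v u" "mult G v v = 0"
    and "mult G u v \<noteq> 0 \<Longrightarrow> u \<in> verts G" "mult G u v \<noteq> 0 \<Longrightarrow> v \<in> verts G"
  using assms unfolding wf_mgraph_def by blast+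

lemma channelsD:
  assumes "C \<in> channels G"
  shows "C \<subseteq> verts G" "v \<in> verts G \<Longrightarrow> even (\<Sum>u\<in>C. mult G v u)"
  using assms unfolding channels_def by blast+

lemma finite_channel: "finite (verts G) \<Longrightarrow> C \<in> channels G \<Longrightarrow> finite C"
  using channelsD(1) finite_subset by blast

lemma sum_sym_diff:
  fixes f :: "'a \<Rightarrow> nat"
  assumes "finite C" "finite D"
  shows "sum f (sym_diff C D) + 2 * sum f (C \<inter> D) = sum f C + sum f D"
proof -
  have "sum f C = sum f (C - D) + sum f (C \<inter> D)" "sum f D = sum f (D - C) + sum f (C \<inter> D)"
    using assms by (metis add.commute sum.Int_Diff Int_commute)+
  moreover have "sum f (sym_diff C D) = sum f (C - D) + sum f (D - C)"
    using assms by (intro sum.union_disjoint) auto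
  ultimately show ?thesis by simp
qed

lemma sum_split_pair:
  fixes f :: "'a \<Rightarrow> nat"
  assumes "finite C" "p \<noteq> q"
  shows "sum f C = sum f (C - {p, q}) + (if p \<in> C then f p else 0) + (if q \<in> C then f q else 0)"
proof -
  have "sum f C = sum f (C - {p, q}) + sum f (C \<inter> {p, q})"
    using assms(1) by (metis add.commute sum.Int_Diff)
  moreover have "sum f (C \<inter> {p, q}) = (if p \<in> C then f p else 0) + (if q \<in> C then f q else 0)"
    using assms(2) by (cases "p \<in> C"; cases "q \<in> C") (simp_all add: Int_insert_right)
  ultimately show ?thesis
    by simp
qed

lemma sym_diff_channels:
  assumes "finite (verts G)" "C \<in> channels G" "D \<in> channels G"
  shows "sym_diff C D \<in> channels G"
  unfolding channels_def
proof (intro CollectI conjI ballI)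
  show "sym_diff C D \<subseteq> verts G"
    using assms(2,3) channelsD(1) by blast
  have finite: "finite C" "finite D"
    using assms finite_channel by blast+
  fix v assume "v \<in> verts G"
  hence "even (\<Sum>u\<in>C. mult G v u)" "even (\<Sum>u\<in>D. mult G v u)"
    using assms(2,3) by (blast intro: channelsD(2))+
  hence "even ((\<Sum>u\<in>C. mult G v u) + (\<Sum>u\<in>D. mult G v u))"
    by simp
  hence "even ((\<Sum>u\<in>sym_diff C D. mult G v u) + 2 * (\<Sum>u\<in>C \<inter> D. mult G v u))"
    by (simp only: sum_sym_diff[OF finite])
  thus "even (\<Sum>u\<in>sym_diff C D. mult G v u)"
    by simp
qed

lemma subspace_ind_channels:
  assumes "finite (verts G)"
  shows "bitfun.subspace (ind ` channels G)"
proof (rule subspace_ind_image)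
  show "{} \<in> channels G"
    by (simp add: channels_def)
qed (rule sym_diff_channels[OF assms])

lemma channel_dim_eq_if_restriction_bij:
  assumes "finite (verts G)"
    and onto: "(\<lambda>C. C - A) ` channels G = channels H"
    and kernel: "\<And>C. C \<in> channels G \<Longrightarrow> C \<subseteq> A \<Longrightarrow> C = {}"
  shows "channel_dim H = channel_dim G"
proof -
  interpret zero_on: Vector_Spaces.linear bscale bscale "zero_on A :: ('a \<Rightarrow> bit) \<Rightarrow> _"
    by (rule linear_zero_on)
  have subspace: "bitfun.subspace (ind ` channels G)"
    by (rule subspace_ind_channels[OF assms(1)])
  have "inj_on (zero_on A) (ind ` channels G)"
    unfolding zero_on.inj_on_iff_eq_0[OF subspace] using kernel by (auto simp: zero_on_ind)
  hence "bitfun.dim (zero_on A ` ind ` channels G) = channel_dim G"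
    unfolding channel_dim_def by (rule zero_on.dim_image_eq_if_inj_on_subspace[OF subspace])
  moreover have "zero_on A ` ind ` channels G = ind ` (\<lambda>C. C - A) ` channels G"
    by (simp add: image_image zero_on_ind)
  ultimately show ?thesis
    unfolding channel_dim_def onto by simp
qed

lemma channel_dim_fully_reduced:
  assumes "wf_mgraph H" "fully_reduced H"
  shows "channel_dim H = card (verts H)"
proof -
  have "mult H v u = 0" if "v \<in> verts H" "u \<in> verts H" for u v
    using assms that wf_mgraphD(1)[OF assms(1)] unfolding fully_reduced_def deg_def by simp
  hence "(\<Sum>u\<in>C. mult H v u) = 0" if "C \<subseteq> verts H" "v \<in> verts H" for C v
    using that by (intro sum.neutral) blast
  hence "channels H = Pow (verts H)"
    unfolding channels_def by auto
  thus ?thesis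
    unfolding channel_dim_def using dim_ind_Pow[OF wf_mgraphD(1)[OF assms(1)]] by simp
qed

section \<open>Deleting a double edge\<close>

lemma channels_eq_if_mult_parity_eq:
  assumes "finite (verts G)" "verts H = verts G"
    and "\<And>x y. even (mult H x y) \<longleftrightarrow> even (mult G x y)"
  shows "channels H = channels G"
proof -
  have "even (\<Sum>u\<in>C. mult H v u) \<longleftrightarrow> even (\<Sum>u\<in>C. mult G v u)" if "C \<subseteq> verts G" for C v
    using finite_subset[OF that assms(1)] assms(3) by (simp add: even_sum_iff)
  thus ?thesis
    unfolding channels_def assms(2) by (simp cong: conj_cong)
qed

lemma ed_move_preserves:
  assumes wf: "wf_mgraph G" and "ed_move G H"
  shows "wf_mgraph H" "channels H = channels G"
proof -
  obtain a b where "a \<noteq> b" "mult G a b \<ge> 2"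
    and H: "H = (verts G, (\<lambda>x y. if (x = a \<and> y = b) \<or> (x = b \<and> y = a)
                              then mult G x y - 2 else mult G x y))"
    using assms(2) unfolding ed_move_def by blast
  have verts_H: "verts H = verts G"
    by (simp add: H verts_def)
  have mult_H: "mult H x y = (if (x = a \<and> y = b) \<or> (x = b \<and> y = a) then mult G x y - 2 else mult G x y)" for x y
    by (simp add: H mult_def)
  have "mult G b a \<ge> 2"
    using \<open>mult G a b \<ge> 2\<close> wf_mgraphD(2)[OF wf] by metis
  moreover have "even (m - 2) \<longleftrightarrow> even m" if "m \<ge> 2" for m :: nat
    using that by presburger
  ultimately have parity: "even (mult H x y) \<longleftrightarrow> even (mult G x y)" for x y
    using \<open>mult G a b \<ge> 2\<close> unfolding mult_H by auto
  have nonzero: "mult G x y \<noteq> 0" if "mult H x y \<noteq> 0" for x y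
    using that by (auto simp: mult_H split: if_splits)
  show "wf_mgraph H"
    unfolding wf_mgraph_def verts_H
  proof (intro conjI allI impI)
    show "finite (verts G)"
      by (rule wf_mgraphD(1)[OF wf])
    show "mult H u v = mult H v u" for u v
    proof -
      have "(u = a \<and> v = b \<or> u = b \<and> v = a) \<longleftrightarrow> (v = a \<and> u = b \<or> v = b \<and> u = a)"
        by blast
      thus ?thesis
        unfolding mult_H by (simp only: wf_mgraphD(2)[OF wf, of u v])
    qed
    show "mult H v v = 0" for v
      using wf_mgraphD(3)[OF wf, of v] unfolding mult_H by simp
    show "u \<in> verts G" "v \<in> verts G" if "mult H u v \<noteq> 0" for u v
      using nonzero[OF that] wf_mgraphD(4,5)[OF wf] by blast+
  qed
  show "channels H = channels G"
    using wf_mgraphD(1)[OF wf] verts_H parity by (rule channels_eq_if_mult_parity_eq)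
qed

section \<open>Deleting a pendant edge\<close>

definition delete_verts :: "'a mgraph \<Rightarrow> 'a set \<Rightarrow> 'a mgraph" where
  "delete_verts G A = (verts G - A, \<lambda>x y. if x \<in> A \<or> y \<in> A then 0 else mult G x y)"

lemma verts_delete_verts [simp]: "verts (delete_verts G A) = verts G - A"
  by (simp add: delete_verts_def verts_def)

lemma mult_delete_verts [simp]:
  "mult (delete_verts G A) x y = (if x \<in> A \<or> y \<in> A then 0 else mult G x y)"
  by (simp add: delete_verts_def mult_def)

lemma wf_delete_verts:
  assumes wf: "wf_mgraph G"
  shows "wf_mgraph (delete_verts G A)"
  unfolding wf_mgraph_def verts_delete_verts mult_delete_verts
proof (intro conjI allI impI)
  show "finite (verts G - A)"
    using wf_mgraphD(1)[OF wf] by simp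
  show "(if u \<in> A \<or> v \<in> A then 0 else mult G u v) = (if v \<in> A \<or> u \<in> A then 0 else mult G v u)" for u v
    using wf_mgraphD(2)[OF wf, of u v] by (simp add: disj_commute)
  show "(if v \<in> A \<or> v \<in> A then 0 else mult G v v) = 0" for v
    using wf_mgraphD(3)[OF wf, of v] by simp
  show "u \<in> verts G - A" "v \<in> verts G - A" if "(if u \<in> A \<or> v \<in> A then 0 else mult G u v) \<noteq> 0" for u v
    using that wf_mgraphD(4,5)[OF wf, of u v] by (simp_all split: if_splits)
qed

lemma channels_delete_verts:
  "channels (delete_verts G A) = {C. C \<subseteq> verts G - A \<and> (\<forall>x\<in>verts G - A. even (\<Sum>u\<in>C. mult G x u))}"
proof -
  have "(\<Sum>u\<in>C. mult (delete_verts G A) x u) = (\<Sum>u\<in>C. mult G x u)" if "C \<subseteq> verts G - A" "x \<notin> A" for C x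
    using that by (intro sum.cong) auto
  thus ?thesis
    unfolding channels_def verts_delete_verts by (auto cong: conj_cong)
qed

lemma fv_move_iff:
  "fv_move G H \<longleftrightarrow> (\<exists>v1 v2. v1 \<in> verts G \<and> v1 \<noteq> v2 \<and> mult G v1 v2 \<ge> 1 \<and> deg G v1 = 1
      \<and> H = delete_verts G {v1, v2})"
  by (simp add: fv_move_def delete_verts_def)

locale pendant_edge =
  fixes G :: "'a mgraph" and v1 v2 :: 'a
  assumes wf: "wf_mgraph G" and v1_in: "v1 \<in> verts G" and distinct: "v1 \<noteq> v2"
    and adjacent: "mult G v1 v2 \<ge> 1" and deg_v1: "deg G v1 = 1"
begin

lemma finite_verts: "finite (verts G)"
  by (rule wf_mgraphD(1)[OF wf])

lemma v2_in: "v2 \<in> verts G"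
  using adjacent wf_mgraphD(5)[OF wf, of v1 v2] by simp

lemma mult_v1: "mult G v1 u = (if u = v2 then 1 else 0)"
proof -
  have "mult G v1 v2 + (\<Sum>u\<in>verts G - {v2}. mult G v1 u) = 1"
    using deg_v1 v2_in finite_verts by (simp add: deg_def sum.remove)
  hence "mult G v1 v2 = 1" "(\<Sum>u\<in>verts G - {v2}. mult G v1 u) = 0"
    using adjacent by linarith+
  hence "mult G v1 v2 = 1" "\<forall>u\<in>verts G - {v2}. mult G v1 u = 0"
    using finite_verts by simp_all
  thus ?thesis
    using wf_mgraphD(5)[OF wf, of v1 u] by auto
qed

lemma mult_v1': "mult G u v1 = (if u = v2 then 1 else 0)"
  using mult_v1 wf_mgraphD(2)[OF wf] by metis

lemma sum_mult_v1: "(\<Sum>u\<in>C. mult G v1 u) = (if v2 \<in> C then 1 else 0)"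
  if "finite C"
  using that by (simp add: mult_v1 sum.delta')

lemma v2_notin_channel:
  assumes "C \<in> channels G"
  shows "v2 \<notin> C"
proof
  assume "v2 \<in> C"
  moreover have "finite C"
    using finite_channel[OF finite_verts assms] .
  ultimately have "(\<Sum>u\<in>C. mult G v1 u) = 1"
    by (simp add: sum_mult_v1)
  thus False
    using channelsD(2)[OF assms v1_in] by simp
qed

lemma channel_restrict:
  assumes "C \<in> channels G"
  shows "C - {v1, v2} \<in> channels (delete_verts G {v1, v2})"
  unfolding channels_delete_verts
proof (intro CollectI conjI ballI)
  show "C - {v1, v2} \<subseteq> verts G - {v1, v2}"
    using channelsD(1)[OF assms] by blast
  fix x assume x: "x \<in> verts G - {v1, v2}"
  have finite: "finite C"
    using finite_channel[OF finite_verts assms] .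
  have vanish: "\<forall>u\<in>C - (C - {v1, v2}). mult G x u = 0"
  proof
    fix u assume "u \<in> C - (C - {v1, v2})"
    hence "u = v1"
      using v2_notin_channel[OF assms] by blast
    thus "mult G x u = 0"
      using x by (simp add: mult_v1')
  qed
  have "(\<Sum>u\<in>C. mult G x u) = (\<Sum>u\<in>C - {v1, v2}. mult G x u)"
    using sum.mono_neutral_right[OF finite Diff_subset vanish] .
  thus "even (\<Sum>u\<in>C - {v1, v2}. mult G x u)"
    using channelsD(2)[OF assms, of x] x by simp
qed

lemma channel_extend:
  assumes D: "D \<in> channels (delete_verts G {v1, v2})"
  obtains C where "C \<in> channels G" "D = C - {v1, v2}"
proof -
  \<comment> \<open>Adding v1 fixes the parity at v2 and disturbs no other vertex.\<close>
  define C where "C = (if odd (\<Sum>u\<in>D. mult G v2 u) then insert v1 D else D)"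
  have D_sub: "D \<subseteq> verts G - {v1, v2}"
    using D by (simp add: channels_delete_verts)
  hence "finite D"
    using finite_verts finite_subset by blast
  have sum_C: "(\<Sum>u\<in>C. mult G x u)
      = (\<Sum>u\<in>D. mult G x u) + (if odd (\<Sum>u\<in>D. mult G v2 u) \<and> x = v2 then 1 else 0)" for x
  proof (cases "odd (\<Sum>u\<in>D. mult G v2 u)")
    case True
    moreover have "v1 \<notin> D"
      using D_sub by blast
    ultimately show ?thesis
      using \<open>finite D\<close> by (simp add: C_def mult_v1')
  qed (simp add: C_def)
  have "C \<in> channels G"
    unfolding channels_def
  proof (intro CollectI conjI ballI)
    show "C \<subseteq> verts G"
      using D_sub v1_in by (auto simp: C_def)
    fix x assume "x \<in> verts G"
    then consider "x = v1" | "x = v2" | "x \<in> verts G - {v1, v2}"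
      by blast
    thus "even (\<Sum>u\<in>C. mult G x u)"
    proof cases
      case 1
      have "v2 \<notin> C"
        using D_sub distinct by (auto simp: C_def)
      moreover have "finite C"
        using \<open>finite D\<close> by (simp add: C_def)
      ultimately show ?thesis
        using 1 by (simp add: sum_mult_v1)
    next
      case 2
      thus ?thesis
        using sum_C by simp
    next
      case 3
      thus ?thesis
        using sum_C D by (auto simp: channels_delete_verts)
    qed
  qed
  moreover have "D = C - {v1, v2}"
    using D_sub by (auto simp: C_def)
  ultimately show ?thesis
    by (rule that)
qed

lemma channel_subset_pair_empty:
  assumes "C \<in> channels G" "C \<subseteq> {v1, v2}"
  shows "C = {}"
proof -
  have "C \<subseteq> {v1}"
    using assms v2_notin_channel by blast
  moreover have "v1 \<notin> C"
  proof
    assume "v1 \<in> C"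
    with \<open>C \<subseteq> {v1}\<close> have "C = {v1}"
      by blast
    hence "(\<Sum>u\<in>C. mult G v2 u) = 1"
      by (simp add: mult_v1')
    thus False
      using channelsD(2)[OF assms(1) v2_in] by simp
  qed
  ultimately show ?thesis
    by blast
qed

lemma channel_dim_delete_pendant_edge:
  "channel_dim (delete_verts G {v1, v2}) = channel_dim G"
proof (rule channel_dim_eq_if_restriction_bij[OF finite_verts])
  show "(\<lambda>C. C - {v1, v2}) ` channels G = channels (delete_verts G {v1, v2})"
  proof (intro equalityI subsetI)
    fix D assume "D \<in> (\<lambda>C. C - {v1, v2}) ` channels G"
    thus "D \<in> channels (delete_verts G {v1, v2})"
      using channel_restrict by blast
  next
    fix D assume "D \<in> channels (delete_verts G {v1, v2})"
    then obtain C where "C \<in> channels G" "D = C - {v1, v2}"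
      by (rule channel_extend)
    thus "D \<in> (\<lambda>C. C - {v1, v2}) ` channels G"
      by blast
  qed
qed (rule channel_subset_pair_empty)

end

lemma fv_move_preserves:
  assumes wf: "wf_mgraph G" and "fv_move G H"
  shows "wf_mgraph H" "channel_dim H = channel_dim G"
proof -
  obtain v1 v2 where "v1 \<in> verts G" "v1 \<noteq> v2" "mult G v1 v2 \<ge> 1" "deg G v1 = 1"
    and H: "H = delete_verts G {v1, v2}"
    using assms(2) unfolding fv_move_iff by blast
  then interpret pendant_edge G v1 v2
    using wf by unfold_locales
  show "wf_mgraph H"
    unfolding H by (rule wf_delete_verts[OF wf])
  show "channel_dim H = channel_dim G"
    unfolding H by (rule channel_dim_delete_pendant_edge)
qed

section \<open>Contracting a vertex of degree two\<close>

lemma verts_vc_result [simp]: "verts (vc_result G v v1 v2) = verts G - {v, v2}"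
  by (simp add: vc_result_def verts_def)

lemma mult_vc_result:
  "mult (vc_result G v v1 v2) x y =
    (if x \<in> {v, v2} \<or> y \<in> {v, v2} \<or> x = y then 0
     else if x = v1 then mult G v1 y + mult G v2 y
     else if y = v1 then mult G x v1 + mult G x v2
     else mult G x y)"
  by (simp add: vc_result_def mult_def)

locale degree_two_vertex =
  fixes G :: "'a mgraph" and v v1 v2 :: 'a
  assumes wf: "wf_mgraph G" and v_in: "v \<in> verts G" and deg_v: "deg G v = 2"
    and distinct: "v1 \<noteq> v2" and mult_v_v1: "mult G v v1 = 1" and mult_v_v2: "mult G v v2 = 1"
begin

lemma finite_verts: "finite (verts G)"
  by (rule wf_mgraphD(1)[OF wf])

abbreviation contracted :: "'a mgraph" where
  "contracted \<equiv> vc_result G v v1 v2"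

lemma mult_commute: "mult G x y = mult G y x"
  by (rule wf_mgraphD(2)[OF wf])

lemma mult_self: "mult G x x = 0"
  by (rule wf_mgraphD(3)[OF wf])

lemma v_ne: "v \<noteq> v1" "v \<noteq> v2"
  using mult_v_v1 mult_v_v2 mult_self by auto

lemma v1_in: "v1 \<in> verts G" and v2_in: "v2 \<in> verts G"
  using mult_v_v1 mult_v_v2 wf_mgraphD(5)[OF wf, of v] by auto

lemma mult_v: "mult G v u = (if u = v1 \<or> u = v2 then 1 else 0)"
proof -
  have "(\<Sum>u\<in>verts G - {v1, v2}. mult G v u) + 1 + 1 = 2"
    using sum_split_pair[OF finite_verts distinct, of "mult G v"] deg_v v1_in v2_in
      mult_v_v1 mult_v_v2 by (simp add: deg_def)
  hence "\<forall>u\<in>verts G - {v1, v2}. mult G v u = 0"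
    using finite_verts by simp
  thus ?thesis
    using mult_v_v1 mult_v_v2 wf_mgraphD(5)[OF wf, of v u] by auto
qed

lemma mult_v': "mult G u v = (if u = v1 \<or> u = v2 then 1 else 0)"
  using mult_v mult_commute by metis

lemma sum_mult_v:
  assumes "finite C"
  shows "(\<Sum>u\<in>C. mult G v u) = (if v1 \<in> C then 1 else 0) + (if v2 \<in> C then 1 else 0)"
proof -
  have "(\<Sum>u\<in>C - {v1, v2}. mult G v u) = 0"
    by (simp add: mult_v)
  thus ?thesis
    using sum_split_pair[OF assms distinct, of "mult G v"] mult_v_v1 mult_v_v2 by simp
qed

lemma wf_contracted: "wf_mgraph contracted"
  unfolding wf_mgraph_def verts_vc_result
proof (intro conjI allI impI)
  show "finite (verts G - {v, v2})"
    using finite_verts by simp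
  show "mult contracted x y = mult contracted y x" for x y
  proof (cases "x \<in> {v, v2} \<or> y \<in> {v, v2} \<or> x = y")
    case False
    thus ?thesis
      unfolding mult_vc_result using mult_commute[of v1 y] mult_commute[of v2 y] mult_commute[of x v1] mult_commute[of x v2] mult_commute[of x y] mult_self[of x]
      by (cases "x = v1"; cases "y = v1") simp_all
  qed (auto simp: mult_vc_result)
  show "mult contracted x x = 0" for x
    by (simp add: mult_vc_result)
  show "x \<in> verts G - {v, v2}" "y \<in> verts G - {v, v2}" if "mult contracted x y \<noteq> 0" for x y
  proof -
    have "x \<notin> {v, v2}" "y \<notin> {v, v2}"
      using that by (auto simp: mult_vc_result)
    moreover have "x \<in> verts G"
    proof (cases "x = v1")
      case False
      hence "mult G x y \<noteq> 0 \<or> mult G x v1 \<noteq> 0 \<or> mult G x v2 \<noteq> 0"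
        using that unfolding mult_vc_result by (auto split: if_splits)
      thus ?thesis
        using wf_mgraphD(4)[OF wf] by blast
    qed (simp add: v1_in)
    moreover have "y \<in> verts G"
    proof (cases "y = v1")
      case False
      hence "mult G x y \<noteq> 0 \<or> mult G v1 y \<noteq> 0 \<or> mult G v2 y \<noteq> 0"
        using that unfolding mult_vc_result by (auto split: if_splits)
      thus ?thesis
        using wf_mgraphD(5)[OF wf] by blast
    qed (simp add: v1_in)
    ultimately show "x \<in> verts G - {v, v2}" "y \<in> verts G - {v, v2}"
      by blast+
  qed
qed

lemma mult_contracted_other:
  assumes "y \<notin> {v, v1, v2}" "u \<notin> {v, v2}"
  shows "mult contracted y u = mult G y u + (if u = v1 then mult G y v2 else 0)"
  using assms mult_self[of y] by (auto simp: mult_vc_result)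

lemma mult_contracted_v1:
  assumes "u \<notin> {v, v2}"
  shows "mult contracted v1 u + (if u = v1 then mult G v1 v2 else 0) = mult G v1 u + mult G v2 u"
  using assms v_ne distinct mult_self[of v1] mult_commute[of v1 v2] by (auto simp: mult_vc_result)

lemma sum_contracted_other:
  assumes "finite C" "v1 \<in> C \<longleftrightarrow> v2 \<in> C" "y \<notin> {v, v1, v2}"
  shows "(\<Sum>u\<in>C - {v, v2}. mult contracted y u) = (\<Sum>u\<in>C. mult G y u)"
proof -
  have "(\<Sum>u\<in>C - {v, v2}. mult contracted y u)
      = (\<Sum>u\<in>C - {v, v2}. mult G y u + (if u = v1 then mult G y v2 else 0))"
    by (intro sum.cong refl mult_contracted_other[OF assms(3)]) blast
  also have "\<dots> = (\<Sum>u\<in>C - {v, v2}. mult G y u) + (if v2 \<in> C then mult G y v2 else 0)"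
    using assms(1,2) v_ne distinct by (simp add: sum.distrib)
  also have "\<dots> = (\<Sum>u\<in>C. mult G y u)"
    using sum_split_pair[OF assms(1) v_ne(2), of "mult G y"] mult_v'[of y] assms(3) by simp
  finally show ?thesis .
qed

lemma sum_contracted_v1:
  assumes "finite C" "v1 \<in> C \<longleftrightarrow> v2 \<in> C"
  shows "(\<Sum>u\<in>C. mult G v1 u) + (\<Sum>u\<in>C. mult G v2 u)
    = (\<Sum>u\<in>C - {v, v2}. mult contracted v1 u)
      + 2 * ((if v \<in> C then 1 else 0) + (if v2 \<in> C then mult G v1 v2 else 0))"
proof -
  have "(\<Sum>u\<in>C - {v, v2}. mult contracted v1 u) + (if v2 \<in> C then mult G v1 v2 else 0)
      = (\<Sum>u\<in>C - {v, v2}. mult contracted v1 u + (if u = v1 then mult G v1 v2 else 0))"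
    using assms v_ne distinct by (simp add: sum.distrib)
  also have "\<dots> = (\<Sum>u\<in>C - {v, v2}. mult G v1 u + mult G v2 u)"
    by (intro sum.cong refl mult_contracted_v1) blast
  also have "\<dots> = (\<Sum>u\<in>C - {v, v2}. mult G v1 u) + (\<Sum>u\<in>C - {v, v2}. mult G v2 u)"
    by (rule sum.distrib)
  finally have "(\<Sum>u\<in>C - {v, v2}. mult contracted v1 u) + (if v2 \<in> C then mult G v1 v2 else 0)
      = (\<Sum>u\<in>C - {v, v2}. mult G v1 u) + (\<Sum>u\<in>C - {v, v2}. mult G v2 u)" .
  moreover have "(\<Sum>u\<in>C. mult G v1 u)
      = (\<Sum>u\<in>C - {v, v2}. mult G v1 u) + (if v \<in> C then 1 else 0) + (if v2 \<in> C then mult G v1 v2 else 0)"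
    using sum_split_pair[OF assms(1) v_ne(2), of "mult G v1"] mult_v' by simp
  moreover have "(\<Sum>u\<in>C. mult G v2 u) = (\<Sum>u\<in>C - {v, v2}. mult G v2 u) + (if v \<in> C then 1 else 0)"
    using sum_split_pair[OF assms(1) v_ne(2), of "mult G v2"] mult_v' mult_self by simp
  ultimately show ?thesis
    by simp
qed

lemma channel_v1_iff_v2:
  assumes "C \<in> channels G"
  shows "v1 \<in> C \<longleftrightarrow> v2 \<in> C"
  using channelsD(2)[OF assms v_in] sum_mult_v[OF finite_channel[OF finite_verts assms]] by (auto split: if_splits)

lemma channel_restrict:
  assumes C: "C \<in> channels G"
  shows "C - {v, v2} \<in> channels contracted"
  unfolding channels_def verts_vc_result
proof (intro CollectI conjI ballI)
  show "C - {v, v2} \<subseteq> verts G - {v, v2}"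
    using channelsD(1)[OF C] by blast
  note finite = finite_channel[OF finite_verts C] and iff = channel_v1_iff_v2[OF C]
  fix y assume y: "y \<in> verts G - {v, v2}"
  show "even (\<Sum>u\<in>C - {v, v2}. mult contracted y u)"
  proof (cases "y = v1")
    case True
    have "even ((\<Sum>u\<in>C. mult G v1 u) + (\<Sum>u\<in>C. mult G v2 u))"
      using channelsD(2)[OF C v1_in] channelsD(2)[OF C v2_in] by simp
    thus ?thesis
      unfolding True sum_contracted_v1[OF finite iff] by simp
  next
    case False
    thus ?thesis
      using y channelsD(2)[OF C, of y] sum_contracted_other[OF finite iff, of y] by simp
  qed
qed

lemma channel_if_restriction_channel:
  assumes C_sub: "C \<subseteq> verts G" and iff: "v1 \<in> C \<longleftrightarrow> v2 \<in> C"
    and even_v1: "even (\<Sum>u\<in>C. mult G v1 u)" and D: "C - {v, v2} \<in> channels contracted"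
  shows "C \<in> channels G"
  unfolding channels_def
proof (intro CollectI conjI ballI)
  show "C \<subseteq> verts G"
    by (rule C_sub)
  have finite: "finite C"
    using C_sub finite_verts finite_subset by blast
  fix y assume y: "y \<in> verts G"
  consider "y = v" | "y = v1" | "y = v2" | "y \<notin> {v, v1, v2}"
    by blast
  thus "even (\<Sum>u\<in>C. mult G y u)"
  proof cases
    case 1
    thus ?thesis
      using iff by (simp add: sum_mult_v[OF finite])
  next
    case 2
    thus ?thesis
      using even_v1 by simp
  next
    case 3
    have "even (\<Sum>u\<in>C - {v, v2}. mult contracted v1 u)"
      using channelsD(2)[OF D] v1_in v_ne distinct by simp
    hence "even ((\<Sum>u\<in>C. mult G v1 u) + (\<Sum>u\<in>C. mult G v2 u))"
      unfolding sum_contracted_v1[OF finite iff] by simp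
    thus ?thesis
      using even_v1 3 by simp
  next
    case 4
    thus ?thesis
      using y channelsD(2)[OF D, of y] sum_contracted_other[OF finite iff 4] by simp
  qed
qed

lemma channel_extend:
  assumes D: "D \<in> channels contracted"
  obtains C where "C \<in> channels G" "D = C - {v, v2}"
proof -
  have D_sub: "D \<subseteq> verts G - {v, v2}"
    using channelsD(1)[OF D] by simp
  \<comment> \<open>The parity at v forces v2 into C together with v1; adding v fixes the parity at v1.\<close>
  define C0 where "C0 = (if v1 \<in> D then insert v2 D else D)"
  define C where "C = (if odd (\<Sum>u\<in>C0. mult G v1 u) then insert v C0 else C0)"
  have "finite C0"
    using D_sub finite_verts finite_subset by (auto simp: C0_def)
  moreover have "v \<notin> C0"
    using D_sub v_ne by (auto simp: C0_def)
  ultimately have "even (\<Sum>u\<in>C. mult G v1 u)"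
    using mult_v'[of v1] by (simp add: C_def)
  moreover have "C \<subseteq> verts G"
    using D_sub v_in v2_in by (auto simp: C_def C0_def)
  moreover have "v1 \<in> C \<longleftrightarrow> v2 \<in> C"
    using D_sub v_ne by (auto simp: C_def C0_def)
  moreover have D_eq: "D = C - {v, v2}"
    using D_sub v_ne by (auto simp: C_def C0_def)
  ultimately have "C \<in> channels G"
    using D by (intro channel_if_restriction_channel) simp_all
  thus ?thesis
    using D_eq that by blast
qed

lemma channel_subset_pair_empty:
  assumes C: "C \<in> channels G" and "C \<subseteq> {v, v2}"
  shows "C = {}"
proof -
  have "v1 \<notin> C"
    using assms v_ne distinct by blast
  hence "v2 \<notin> C"
    using channel_v1_iff_v2[OF C] by simp
  hence "C \<subseteq> {v}"
    using assms(2) by blast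
  moreover have "v \<notin> C"
  proof
    assume "v \<in> C"
    with \<open>C \<subseteq> {v}\<close> have "C = {v}"
      by blast
    hence "(\<Sum>u\<in>C. mult G v1 u) = 1"
      by (simp add: mult_v')
    thus False
      using channelsD(2)[OF C v1_in] by simp
  qed
  ultimately show ?thesis
    by blast
qed

lemma channel_dim_contracted: "channel_dim contracted = channel_dim G"
proof (rule channel_dim_eq_if_restriction_bij[OF finite_verts])
  show "(\<lambda>C. C - {v, v2}) ` channels G = channels contracted"
  proof (intro equalityI subsetI)
    fix D assume "D \<in> (\<lambda>C. C - {v, v2}) ` channels G"
    thus "D \<in> channels contracted"
      using channel_restrict by blast
  next
    fix D assume "D \<in> channels contracted"
    then obtain C where "C \<in> channels G" "D = C - {v, v2}"
      by (rule channel_extend)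
    thus "D \<in> (\<lambda>C. C - {v, v2}) ` channels G"
      by blast
  qed
qed (rule channel_subset_pair_empty)

end

lemma vc_move_preserves:
  assumes wf: "wf_mgraph G" and "vc_move G H"
  shows "wf_mgraph H" "channel_dim H = channel_dim G"
proof -
  obtain v v1 v2 where "v \<in> verts G" "deg G v = 2" "v1 \<noteq> v2" "mult G v v1 = 1" "mult G v v2 = 1"
    and H: "H = vc_result G v v1 v2"
    using assms(2) unfolding vc_move_def by blast
  then interpret degree_two_vertex G v v1 v2
    using wf by unfold_locales
  show "wf_mgraph H" "channel_dim H = channel_dim G"
    unfolding H by (rule wf_contracted channel_dim_contracted)+
qed

lemma cp_move_preserves:
  assumes "wf_mgraph G" "cp_move G H"
  shows "wf_mgraph H \<and> channel_dim H = channel_dim G"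
  using assms ed_move_preserves fv_move_preserves vc_move_preserves
  unfolding cp_move_def channel_dim_def by metis

lemma cp_moves_preserve:
  assumes "cp_move\<^sup>*\<^sup>* G H" "wf_mgraph G"
  shows "wf_mgraph H \<and> channel_dim H = channel_dim G"
  using assms by (induction rule: rtranclp_induct) (auto dest: cp_move_preserves)

theorem theorem6p3:
  fixes G H :: "'a mgraph"
  assumes "wf_mgraph G"
    and "reducible G"
    and "cp_move\<^sup>*\<^sup>* G H"
    and "fully_reduced H"
  shows "card (verts H) = channel_dim G"
  \<comment> \<open>The hypothesis \<open>reducible G\<close> is implied by the others and not needed.\<close>
  using cp_moves_preserve[OF assms(3,1)] channel_dim_fully_reduced[OF _ assms(4)] by simp

end
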